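(* Let $\beta\in(\frac{1+\sqrt5}{2},2)$. If the quasi-greedy orbit of $1$ hits $\beta^{-1}(\beta-1)^{-1}$ for the first time (there is a minimal $k\ge1$ with $Q^k(1)=\beta^{-1}(\beta-1)^{-1}$ and $Q^i(1)\notin[\beta^{-1},\beta^{-1}(\beta-1)^{-1}]$ for $1\le i<k$), then $\widetilde U_\beta$ is a subshift of finite type.
   Context: $\widetilde U_\beta\subseteq\{0,1\}^{\mathbb{N}}$ is the set of sequences $(a_n)$ that are the unique $\beta$-expansion (sequence with $x=\sum a_n\beta^{-n}$) of the number they represent. The quasi-greedy expansion $(\eta_i)$ of $1$ equals the greedy $\beta$-expansion of $1$ (generated by $G(x)=\beta x\bmod1$ on $[0,1)$, $G(x)=\beta x-1$ on $[1,(\beta-1)^{-1}]$) if that is infinite; if the greedy expansion is $a_1\cdots a_n0^\infty$ with $a_n=1$, then $(\eta_i)=(a_1\cdots a_{n-1}(a_n-1))^\infty$. The quasi-greedy orbit of $1$ is $Q^i(1)=\sum_{j\ge1}\eta_{i+j}\beta^{-j}$, $i\ge1$. A subshift of finite type is a set of all sequences avoiding some finite set of forbidden words. *)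

theory Defs
  imports Complex_Main
begin

text \<open>Digit sequences are functions nat \<Rightarrow> nat, 0-indexed: position n holds the
 digit a_(n+1) of the paper.\<close>

definition binseq :: "(nat \<Rightarrow> nat) \<Rightarrow> bool" where
  "binseq a \<longleftrightarrow> (\<forall>n. a n \<in> {0, 1})"

definition is_expansion :: "real \<Rightarrow> (nat \<Rightarrow> nat) \<Rightarrow> real \<Rightarrow> bool" where
  "is_expansion \<beta> a x \<longleftrightarrow> binseq a \<and> ((\<lambda>n. real (a n) / \<beta> ^ (n + 1)) sums x)"

definition seqval :: "real \<Rightarrow> (nat \<Rightarrow> nat) \<Rightarrow> real" where
  "seqval \<beta> a = (\<Sum>n. real (a n) / \<beta> ^ (n + 1))"

definition Utilde :: "real \<Rightarrow> (nat \<Rightarrow> nat) set" where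
  "Utilde \<beta> = {a. binseq a \<and> (\<forall>b. is_expansion \<beta> b (seqval \<beta> a) \<longrightarrow> b = a)}"

definition Gmap :: "real \<Rightarrow> real \<Rightarrow> real" where
  "Gmap \<beta> x = (if x < 1 then frac (\<beta> * x) else \<beta> * x - 1)"

definition gdigit :: "real \<Rightarrow> real \<Rightarrow> nat" where
  "gdigit \<beta> x = (if x < 1 then nat \<lfloor>\<beta> * x\<rfloor> else 1)"

definition greedy1 :: "real \<Rightarrow> nat \<Rightarrow> nat" where
  "greedy1 \<beta> n = gdigit \<beta> ((Gmap \<beta> ^^ n) 1)"

definition quasi_greedy1 :: "real \<Rightarrow> nat \<Rightarrow> nat" where
  "quasi_greedy1 \<beta> =
     (if \<exists>n. \<forall>m\<ge>n. greedy1 \<beta> m = 0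
      then (let N = (LEAST n. \<forall>m\<ge>n. greedy1 \<beta> m = 0)
            in (\<lambda>i. if i mod N = N - 1 then 0 else greedy1 \<beta> (i mod N)))
      else greedy1 \<beta>)"

text \<open>Q^i(1) = sum_{j>=1} eta_{i+j} beta^{-j}.\<close>
definition Qorb :: "real \<Rightarrow> nat \<Rightarrow> real" where
  "Qorb \<beta> i = (\<Sum>j. real (quasi_greedy1 \<beta> (i + j)) / \<beta> ^ (j + 1))"

definition occurs_at :: "nat list \<Rightarrow> (nat \<Rightarrow> nat) \<Rightarrow> nat \<Rightarrow> bool" where
  "occurs_at w a n \<longleftrightarrow> map a [n..<n + length w] = w"

definition is_SFT :: "(nat \<Rightarrow> nat) set \<Rightarrow> bool" where
  "is_SFT X \<longleftrightarrow> (\<exists>F :: nat list set. finite F \<and>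
      X = {a. binseq a \<and> (\<forall>w\<in>F. \<forall>n. \<not> occurs_at w a n)})"

end

theory Submission
  imports Defs
begin

text \<open>A binary sequence is the unique expansion of its value exactly when none of its tail
  values lies in the switch region \<open>S = [1/\<beta>, 1/(\<beta>(\<beta>-1))]\<close>: a tail value in \<open>S\<close> can be
  continued with either digit, and two different expansions part ways at a tail value in \<open>S\<close>.
  Up to complementing all digits, a tail value in \<open>S\<close> starts with \<open>0\<close>, and the tail after
  this \<open>0\<close> is at least \<open>1\<close>, the value of the quasi-greedy expansion \<open>\<eta>\<close>. Comparing it with
  \<open>\<eta>\<close> up to the first time \<open>k\<close> at which \<open>Q\<^sup>k(1)\<close> hits the right end of \<open>S\<close> exhibits one of
  the words \<open>0 \<eta>\<^sub>1 \<dots> \<eta>\<^sub>j 1\<close> (\<open>j \<le> k\<close>) or \<open>0 1\<^sup>J\<close> in the sequence, and every sequence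
  containing such a word has a tail value in \<open>S\<close>.\<close>

section \<open>Tail values of binary sequences\<close>

definition tail_value :: "real \<Rightarrow> (nat \<Rightarrow> nat) \<Rightarrow> nat \<Rightarrow> real" where
  "tail_value \<beta> a n = seqval \<beta> (\<lambda>j. a (n + j))"

definition compl_seq :: "(nat \<Rightarrow> nat) \<Rightarrow> nat \<Rightarrow> nat" where
  "compl_seq a = (\<lambda>i. 1 - a i)"

lemma binseq_cases: "binseq a \<Longrightarrow> a n = 0 \<or> a n = 1"
  unfolding binseq_def by auto

lemma binseq_le_1: "binseq a \<Longrightarrow> a n \<le> 1"
  using binseq_cases[of a n] by auto

lemma binseq_shift: "binseq a \<Longrightarrow> binseq (\<lambda>j. a (n + j))"
  unfolding binseq_def by auto

lemma binseq_compl_seq: "binseq a \<Longrightarrow> binseq (compl_seq a)"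
  unfolding binseq_def compl_seq_def by auto

lemma compl_seq_compl_seq: "binseq a \<Longrightarrow> compl_seq (compl_seq a) = a"
  using binseq_le_1 unfolding compl_seq_def by fastforce

lemma inverse_powers_sums: "1 < (\<beta>::real) \<Longrightarrow> (\<lambda>n. 1 / \<beta> ^ (n + 1)) sums (1 / (\<beta> - 1))"
proof -
  assume "1 < \<beta>"
  then have "(\<lambda>n. (1 / \<beta>) ^ n * (1 / \<beta>)) sums (1 / (1 - 1 / \<beta>) * (1 / \<beta>))"
    by (intro sums_mult2 geometric_sums) simp
  with \<open>1 < \<beta>\<close> show ?thesis
    by (simp add: power_divide field_simps)
qed

lemma seqval_sums:
  assumes "1 < \<beta>" "binseq a"
  shows "(\<lambda>n. real (a n) / \<beta> ^ (n + 1)) sums seqval \<beta> a"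
proof -
  have "summable (\<lambda>n. real (a n) / \<beta> ^ (n + 1))"
  proof (rule summable_comparison_test)
    show "summable (\<lambda>n. 1 / \<beta> ^ (n + 1))"
      using inverse_powers_sums[OF assms(1)] sums_summable by blast
    show "\<exists>N. \<forall>n\<ge>N. norm (real (a n) / \<beta> ^ (n + 1)) \<le> 1 / \<beta> ^ (n + 1)"
      using binseq_le_1[OF assms(2)] assms(1) by (auto intro!: divide_right_mono)
  qed
  then show ?thesis
    unfolding seqval_def by (rule summable_sums)
qed

lemma seqval_eq_head_tail:
  assumes "1 < \<beta>" "binseq a"
  shows "seqval \<beta> a = (real (a 0) + seqval \<beta> (\<lambda>j. a (Suc j))) / \<beta>"
proof -
  have "(\<lambda>n. real (a (Suc n)) / \<beta> ^ (n + 1)) sums seqval \<beta> (\<lambda>j. a (Suc j))"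
    using seqval_sums[OF assms(1) binseq_shift[OF assms(2), of 1]] by simp
  then have "(\<lambda>n. real (a (Suc n)) / \<beta> ^ (n + 1) / \<beta>) sums (seqval \<beta> (\<lambda>j. a (Suc j)) / \<beta>)"
    by (rule sums_divide)
  then have "(\<lambda>n. real (a (Suc n)) / \<beta> ^ (Suc n + 1)) sums (seqval \<beta> (\<lambda>j. a (Suc j)) / \<beta>)"
    by (simp add: mult.commute)
  then have "(\<lambda>n. real (a n) / \<beta> ^ (n + 1))
      sums (seqval \<beta> (\<lambda>j. a (Suc j)) / \<beta> + real (a 0) / \<beta> ^ (0 + 1))"
    by (rule sums_Suc)
  with seqval_sums[OF assms] show ?thesis
    using sums_unique2 by (fastforce simp: add_divide_distrib)
qed

lemma tail_value_0: "tail_value \<beta> a 0 = seqval \<beta> a"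
  unfolding tail_value_def by simp

lemma tail_value_Suc:
  "1 < \<beta> \<Longrightarrow> binseq a \<Longrightarrow> tail_value \<beta> a n = (real (a n) + tail_value \<beta> a (Suc n)) / \<beta>"
  unfolding tail_value_def using seqval_eq_head_tail[OF _ binseq_shift, of \<beta> a n] by simp

lemma tail_value_prefix:
  assumes "1 < \<beta>" "binseq a"
  shows "tail_value \<beta> a n
    = (\<Sum>i<j. real (a (n + i)) / \<beta> ^ (i + 1)) + tail_value \<beta> a (n + j) / \<beta> ^ j"
proof (induction j)
  case (Suc j)
  then show ?case
    using tail_value_Suc[OF assms, of "n + j"] by (simp add: field_simps add_divide_distrib)
qed simp

lemma seqval_bounds:
  assumes "1 < \<beta>" "binseq a"
  shows "0 \<le> seqval \<beta> a" "seqval \<beta> a \<le> 1 / (\<beta> - 1)"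
proof -
  have sums: "(\<lambda>n. real (a n) / \<beta> ^ (n + 1)) sums seqval \<beta> a"
    using seqval_sums[OF assms] .
  show "0 \<le> seqval \<beta> a"
    using sums_le[OF _ sums_zero sums] assms(1) by simp
  show "seqval \<beta> a \<le> 1 / (\<beta> - 1)"
    using sums_le[OF _ sums inverse_powers_sums[OF assms(1)]] binseq_le_1[OF assms(2)] assms(1)
    by (simp add: divide_right_mono)
qed

lemma tail_value_bounds:
  "1 < \<beta> \<Longrightarrow> binseq a \<Longrightarrow> 0 \<le> tail_value \<beta> a n \<and> tail_value \<beta> a n \<le> 1 / (\<beta> - 1)"
  unfolding tail_value_def using seqval_bounds binseq_shift by blast

lemma seqval_compl_seq:
  assumes "1 < \<beta>" "binseq a"
  shows "seqval \<beta> (compl_seq a) = 1 / (\<beta> - 1) - seqval \<beta> a"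
proof -
  have "(\<lambda>n. 1 / \<beta> ^ (n + 1) - real (a n) / \<beta> ^ (n + 1)) sums (1 / (\<beta> - 1) - seqval \<beta> a)"
    by (intro sums_diff inverse_powers_sums seqval_sums assms)
  moreover have "seqval \<beta> (compl_seq a) = (\<Sum>n. 1 / \<beta> ^ (n + 1) - real (a n) / \<beta> ^ (n + 1))"
    unfolding seqval_def compl_seq_def
    using binseq_le_1[OF assms(2)] by (simp add: of_nat_diff diff_divide_distrib)
  ultimately show ?thesis
    by (simp add: sums_iff)
qed

lemma tail_value_compl_seq:
  "1 < \<beta> \<Longrightarrow> binseq a \<Longrightarrow> tail_value \<beta> (compl_seq a) n = 1 / (\<beta> - 1) - tail_value \<beta> a n"
  unfolding tail_value_def using seqval_compl_seq[OF _ binseq_shift, of \<beta> a n]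
  by (simp add: compl_seq_def)

lemma tail_value_diff_common_prefix:
  assumes "1 < \<beta>" "binseq a" "binseq b" "\<forall>i<j. b (q + i) = a (p + i)"
  shows "tail_value \<beta> b q - tail_value \<beta> a p
    = (tail_value \<beta> b (q + j) - tail_value \<beta> a (p + j)) / \<beta> ^ j"
proof -
  have "(\<Sum>i<j. real (b (q + i)) / \<beta> ^ (i + 1)) = (\<Sum>i<j. real (a (p + i)) / \<beta> ^ (i + 1))"
    using assms(4) by simp
  then show ?thesis
    using tail_value_prefix[OF assms(1,2), of p j] tail_value_prefix[OF assms(1,3), of q j]
    by (simp add: diff_divide_distrib)
qed

lemma tail_value_le_iff_common_prefix:
  assumes "1 < \<beta>" "binseq a" "binseq b" "\<forall>i<j. b (q + i) = a (p + i)"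
  shows "tail_value \<beta> a p \<le> tail_value \<beta> b q
    \<longleftrightarrow> tail_value \<beta> a (p + j) \<le> tail_value \<beta> b (q + j)"
proof -
  have "0 < \<beta> ^ j"
    using assms(1) by simp
  have "tail_value \<beta> a p \<le> tail_value \<beta> b q \<longleftrightarrow> 0 \<le> tail_value \<beta> b q - tail_value \<beta> a p"
    by simp
  also have "\<dots> \<longleftrightarrow> 0 \<le> (tail_value \<beta> b (q + j) - tail_value \<beta> a (p + j)) / \<beta> ^ j"
    unfolding tail_value_diff_common_prefix[OF assms] ..
  also have "\<dots> \<longleftrightarrow> tail_value \<beta> a (p + j) \<le> tail_value \<beta> b (q + j)"
    using \<open>0 < \<beta> ^ j\<close> by (simp add: zero_le_divide_iff)
  finally show ?thesis .
qed

lemma tail_value_eq_max_imp_ones: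
  assumes "1 < \<beta>" "binseq a" "tail_value \<beta> a n = 1 / (\<beta> - 1)"
  shows "a (n + j) = 1"
proof -
  define c where "c = (\<lambda>i. compl_seq a (n + i))"
  have c_bin: "binseq c"
    unfolding c_def using binseq_shift binseq_compl_seq assms(2) by blast
  have "seqval \<beta> c = 0"
    using tail_value_compl_seq[OF assms(1,2), of n] assms(3) unfolding c_def tail_value_def by simp
  then have "(\<lambda>i. real (c i) / \<beta> ^ (i + 1)) = (\<lambda>_. 0)"
    using seqval_sums[OF assms(1) c_bin] assms(1)
    by (subst (asm) seqval_def, subst (asm) suminf_eq_zero_iff) (auto simp: sums_iff)
  then have "c j = 0"
    using assms(1) by (metis divide_eq_0_iff of_nat_eq_0_iff power_not_zero not_one_less_zero)
  then show ?thesis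
    using binseq_le_1[OF assms(2), of "n + j"] unfolding c_def compl_seq_def by simp
qed

section \<open>Unique expansions and the switch region\<close>

definition switch_region :: "real \<Rightarrow> real set" where
  "switch_region \<beta> = {1 / \<beta> .. 1 / (\<beta> * (\<beta> - 1))}"

lemma digit_zero_tail_value_le:
  assumes "1 < \<beta>" "binseq b" "b q = 0"
  shows "tail_value \<beta> b q \<le> 1 / (\<beta> * (\<beta> - 1))"
proof -
  have "tail_value \<beta> b q = tail_value \<beta> b (Suc q) / \<beta>"
    using tail_value_Suc[OF assms(1,2), of q] assms(3) by simp
  also have "\<dots> \<le> (1 / (\<beta> - 1)) / \<beta>"
    using tail_value_bounds[OF assms(1,2), of "Suc q"] assms(1) by (intro divide_right_mono) auto
  finally show ?thesis
    by (simp add: mult.commute)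
qed

lemma digit_one_tail_value_ge:
  assumes "1 < \<beta>" "binseq b" "b q = 1"
  shows "1 / \<beta> \<le> tail_value \<beta> b q"
proof -
  have "tail_value \<beta> b q = (1 + tail_value \<beta> b (Suc q)) / \<beta>"
    using tail_value_Suc[OF assms(1,2), of q] assms(3) by simp
  then show ?thesis
    using tail_value_bounds[OF assms(1,2), of "Suc q"] assms(1) by (simp add: divide_right_mono)
qed

lemma digit_zero_tail_value_mem_switch_region_iff:
  assumes "1 < \<beta>" "binseq b" "b q = 0"
  shows "tail_value \<beta> b q \<in> switch_region \<beta> \<longleftrightarrow> 1 \<le> tail_value \<beta> b (Suc q)"
proof -
  have "tail_value \<beta> b q = tail_value \<beta> b (Suc q) / \<beta>"
    using tail_value_Suc[OF assms(1,2), of q] assms(3) by simp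
  then show ?thesis
    using digit_zero_tail_value_le[OF assms] assms(1)
    unfolding switch_region_def by (auto simp: divide_le_cancel)
qed

lemma switch_region_reflect:
  assumes "1 < \<beta>" "t \<in> switch_region \<beta>"
  shows "1 / (\<beta> - 1) - t \<in> switch_region \<beta>"
proof -
  have "1 / (\<beta> - 1) = 1 / \<beta> + 1 / (\<beta> * (\<beta> - 1))"
    using assms(1) by (simp add: field_simps)
  then show ?thesis
    using assms(2) unfolding switch_region_def by auto
qed

lemma tail_value_compl_seq_mem_switch_region_iff:
  assumes "1 < \<beta>" "binseq a"
  shows "tail_value \<beta> (compl_seq a) n \<in> switch_region \<beta> \<longleftrightarrow> tail_value \<beta> a n \<in> switch_region \<beta>"
  using tail_value_compl_seq[OF assms, of n] switch_region_reflect[OF assms(1)]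
  by (metis diff_diff_eq2 diff_add_cancel add.commute)

lemma bounded_over_powers_tendsto_0:
  assumes "1 < (\<beta>::real)" "\<And>n. \<bar>y n\<bar> \<le> B"
  shows "(\<lambda>n. y n / \<beta> ^ n) \<longlonglongrightarrow> 0"
proof (rule tendsto_0_le[where K = B])
  show "(\<lambda>n. (1 / \<beta>) ^ n) \<longlonglongrightarrow> 0"
    using assms(1) by (intro LIMSEQ_power_zero) auto
  show "\<forall>\<^sub>F n in sequentially. norm (y n / \<beta> ^ n) \<le> norm ((1 / \<beta>) ^ n) * B"
    using assms by (intro always_eventually allI)
      (simp add: power_divide abs_divide divide_right_mono mult.commute)
qed

lemma orbit_digits_sums:
  assumes "1 < \<beta>" "\<And>n. x (Suc n) = \<beta> * x n - real (d n)" "\<And>n. \<bar>x n\<bar> \<le> B"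
  shows "(\<lambda>n. real (d n) / \<beta> ^ (n + 1)) sums x 0"
proof -
  have partial: "(\<Sum>i<n. real (d i) / \<beta> ^ (i + 1)) = x 0 - x n / \<beta> ^ n" for n
  proof (induction n)
    case (Suc n)
    have "x (Suc n) / \<beta> ^ Suc n = x n / \<beta> ^ n - real (d n) / \<beta> ^ (n + 1)"
      using assms(1,2) by (simp add: field_simps)
    with Suc show ?case by simp
  qed simp
  have "(\<lambda>n. x 0 - x n / \<beta> ^ n) \<longlonglongrightarrow> x 0 - 0"
    by (intro tendsto_diff tendsto_const bounded_over_powers_tendsto_0[OF assms(1,3)])
  then show ?thesis
    unfolding sums_def partial by simp
qed

primrec lazy_orbit :: "real \<Rightarrow> real \<Rightarrow> nat \<Rightarrow> real" where
  "lazy_orbit \<beta> x 0 = x"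
| "lazy_orbit \<beta> x (Suc n) =
     \<beta> * lazy_orbit \<beta> x n - (if \<beta> * lazy_orbit \<beta> x n \<le> 1 / (\<beta> - 1) then 0 else 1)"

lemma lazy_orbit_bounds:
  assumes "1 < \<beta>" "\<beta> < 2" "0 \<le> x" "x \<le> 1 / (\<beta> - 1)"
  shows "0 \<le> lazy_orbit \<beta> x n \<and> lazy_orbit \<beta> x n \<le> 1 / (\<beta> - 1)"
proof (induction n)
  case (Suc n)
  define y where "y = lazy_orbit \<beta> x n"
  have "1 \<le> 1 / (\<beta> - 1)" "\<beta> * (1 / (\<beta> - 1)) - 1 = 1 / (\<beta> - 1)"
    using assms(1,2) by (simp_all add: field_simps)
  moreover have "0 \<le> \<beta> * y" "\<beta> * y \<le> \<beta> * (1 / (\<beta> - 1))"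
    using Suc assms(1) unfolding y_def by (auto simp del: times_divide_eq_right intro: mult_left_mono)
  ultimately show ?case
    unfolding y_def[symmetric] by (simp add: y_def[symmetric])
qed (use assms in simp)

lemma binary_expansion_exists:
  assumes "1 < \<beta>" "\<beta> < 2" "0 \<le> x" "x \<le> 1 / (\<beta> - 1)"
  shows "\<exists>e. binseq e \<and> seqval \<beta> e = x"
proof -
  define e where "e n = (if \<beta> * lazy_orbit \<beta> x n \<le> 1 / (\<beta> - 1) then 0 else 1 :: nat)" for n
  have "(\<lambda>n. real (e n) / \<beta> ^ (n + 1)) sums lazy_orbit \<beta> x 0"
    by (rule orbit_digits_sums[OF assms(1), where B = "1 / (\<beta> - 1)"])
      (use lazy_orbit_bounds[OF assms] in \<open>auto simp: e_def\<close>)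
  moreover have "binseq e"
    unfolding e_def binseq_def by auto
  ultimately show ?thesis
    unfolding seqval_def by (auto simp: sums_iff)
qed

lemma tail_value_mem_switch_region_not_unique:
  assumes "1 < \<beta>" "\<beta> < 2" "binseq b" "tail_value \<beta> b p \<in> switch_region \<beta>"
  shows "b \<notin> Utilde \<beta>"
proof
  assume unique: "b \<in> Utilde \<beta>"
  define t where "t = tail_value \<beta> b p"
  define d where "d = 1 - b p"
  have "1 \<le> \<beta> * t" "\<beta> * t \<le> 1 / (\<beta> - 1)"
    using assms(1,4) unfolding t_def switch_region_def by (auto simp: field_simps)
  moreover have "d \<le> 1"
    unfolding d_def by auto
  ultimately have "0 \<le> \<beta> * t - d" "\<beta> * t - d \<le> 1 / (\<beta> - 1)"
    by auto
  then obtain e where e: "binseq e" "seqval \<beta> e = \<beta> * t - d"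
    using binary_expansion_exists[OF assms(1,2)] by blast
  define b' where "b' i = (if i < p then b i else if i = p then d else e (i - Suc p))" for i
  have b'_bin: "binseq b'"
    using e(1) assms(3) unfolding b'_def binseq_def d_def by auto
  have "tail_value \<beta> b' p = (real d + seqval \<beta> e) / \<beta>"
    using tail_value_Suc[OF assms(1) b'_bin, of p] unfolding tail_value_def
    by (simp add: b'_def)
  also have "\<dots> = t"
    using e(2) assms(1) by (simp add: field_simps)
  finally have "tail_value \<beta> b' 0 - tail_value \<beta> b 0 = 0"
    using tail_value_diff_common_prefix[OF assms(1,3) b'_bin, of p 0 0]
    unfolding t_def by (simp add: b'_def)
  then have "is_expansion \<beta> b' (seqval \<beta> b)"
    unfolding is_expansion_def using seqval_sums[OF assms(1) b'_bin] b'_bin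
    by (simp add: tail_value_0)
  with unique have "b' = b"
    unfolding Utilde_def by blast
  moreover have "b' p \<noteq> b p"
    using binseq_cases[OF assms(3), of p] unfolding b'_def d_def by auto
  ultimately show False
    by simp
qed

lemma not_unique_imp_tail_value_mem_switch_region:
  assumes "1 < \<beta>" "binseq a" "a \<notin> Utilde \<beta>"
  shows "\<exists>n. tail_value \<beta> a n \<in> switch_region \<beta>"
proof -
  obtain b where b: "is_expansion \<beta> b (seqval \<beta> a)" "b \<noteq> a"
    using assms unfolding Utilde_def by blast
  have b_bin: "binseq b" and same_value: "seqval \<beta> b = seqval \<beta> a"
    using b(1) unfolding is_expansion_def seqval_def by (auto simp: sums_iff)
  define n where "n = (LEAST n. a n \<noteq> b n)"
  have "\<exists>n. a n \<noteq> b n"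
    using b(2) by auto
  then have differ: "a n \<noteq> b n"
    unfolding n_def by (rule LeastI_ex)
  have "\<forall>i<n. b (0 + i) = a (0 + i)"
    unfolding n_def using not_less_Least by force
  then have same_tail: "tail_value \<beta> a n = tail_value \<beta> b n"
    using tail_value_diff_common_prefix[OF assms(1,2) b_bin, of n 0 0] same_value assms(1)
    by (simp add: tail_value_0)
  have "(a n = 0 \<and> b n = 1) \<or> (a n = 1 \<and> b n = 0)"
    using differ binseq_cases[OF assms(2), of n] binseq_cases[OF b_bin, of n] by auto
  then have "tail_value \<beta> a n \<in> switch_region \<beta>"
    using digit_zero_tail_value_le[OF assms(1,2), of n] digit_one_tail_value_ge[OF assms(1,2), of n]
      digit_zero_tail_value_le[OF assms(1) b_bin, of n] digit_one_tail_value_ge[OF assms(1) b_bin, of n]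
    unfolding switch_region_def same_tail by auto
  then show ?thesis ..
qed

lemma Utilde_iff_tail_values:
  assumes "1 < \<beta>" "\<beta> < 2" "binseq a"
  shows "a \<in> Utilde \<beta> \<longleftrightarrow> (\<forall>n. tail_value \<beta> a n \<notin> switch_region \<beta>)"
  using tail_value_mem_switch_region_not_unique[OF assms]
    not_unique_imp_tail_value_mem_switch_region[OF assms(1,3)] by blast

section \<open>The quasi-greedy expansion of \<open>1\<close>\<close>

definition greedy_orbit :: "real \<Rightarrow> nat \<Rightarrow> real" where
  "greedy_orbit \<beta> n = (Gmap \<beta> ^^ n) 1"

lemma greedy_orbit_range:
  assumes "1 < \<beta>" "\<beta> < 2" "1 \<le> n"
  shows "0 \<le> greedy_orbit \<beta> n \<and> greedy_orbit \<beta> n < 1"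
  using assms(3)
proof (induction n rule: dec_induct)
  case base
  then show ?case
    using assms(1,2) by (simp add: greedy_orbit_def Gmap_def)
next
  case (step n)
  then show ?case
    by (simp add: greedy_orbit_def Gmap_def frac_lt_1)
qed

lemma greedy_orbit_Suc:
  assumes "1 < \<beta>" "\<beta> < 2"
  shows "greedy_orbit \<beta> (Suc n) = \<beta> * greedy_orbit \<beta> n - real (greedy1 \<beta> n)
    \<and> greedy1 \<beta> n \<le> 1"
proof (cases "n = 0")
  case True
  then show ?thesis
    by (simp add: greedy_orbit_def Gmap_def greedy1_def gdigit_def)
next
  case False
  then have "0 \<le> greedy_orbit \<beta> n" "greedy_orbit \<beta> n < 1"
    using greedy_orbit_range[OF assms, of n] by auto
  moreover have "\<beta> * greedy_orbit \<beta> n < 2"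
    using calculation assms mult_strict_mono[of \<beta> 2 "greedy_orbit \<beta> n" 1] by simp
  ultimately show ?thesis
    using assms(1)
    by (simp add: greedy_orbit_def Gmap_def greedy1_def gdigit_def frac_def) linarith
qed

lemma binseq_greedy1: "1 < \<beta> \<Longrightarrow> \<beta> < 2 \<Longrightarrow> binseq (greedy1 \<beta>)"
  unfolding binseq_def using greedy_orbit_Suc by (metis insert_iff le_Suc_eq le_zero_eq One_nat_def)

lemma seqval_greedy1:
  assumes "1 < \<beta>" "\<beta> < 2"
  shows "seqval \<beta> (greedy1 \<beta>) = 1"
proof -
  have "\<bar>greedy_orbit \<beta> n\<bar> \<le> 1" for n
    using greedy_orbit_range[OF assms, of n] by (cases "n = 0") (auto simp: greedy_orbit_def)
  then have "(\<lambda>n. real (greedy1 \<beta> n) / \<beta> ^ (n + 1)) sums greedy_orbit \<beta> 0"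
    using orbit_digits_sums[OF assms(1)] greedy_orbit_Suc[OF assms] by blast
  then show ?thesis
    unfolding seqval_def by (simp add: sums_iff greedy_orbit_def)
qed

lemma greedy1_finite_last_digit:
  assumes "1 < \<beta>" "\<beta> < 2" "\<exists>n. \<forall>m\<ge>n. greedy1 \<beta> m = 0"
  defines "N \<equiv> LEAST n. \<forall>m\<ge>n. greedy1 \<beta> m = 0"
  shows "1 \<le> N" "greedy1 \<beta> (N - 1) = 1" "\<forall>m\<ge>N. greedy1 \<beta> m = 0"
proof -
  show zero: "\<forall>m\<ge>N. greedy1 \<beta> m = 0"
    unfolding N_def using assms(3) by (rule LeastI_ex)
  moreover have "greedy1 \<beta> 0 = 1"
    by (simp add: greedy1_def gdigit_def)
  ultimately show "1 \<le> N"
    by (cases N) auto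
  show "greedy1 \<beta> (N - 1) = 1"
  proof (rule ccontr)
    assume "greedy1 \<beta> (N - 1) \<noteq> 1"
    then have "greedy1 \<beta> (N - 1) = 0"
      using binseq_cases[OF binseq_greedy1[OF assms(1,2)]] by blast
    have "\<forall>m\<ge>N - 1. greedy1 \<beta> m = 0"
    proof (intro allI impI)
      fix m
      assume "N - 1 \<le> m"
      with zero \<open>greedy1 \<beta> (N - 1) = 0\<close> show "greedy1 \<beta> m = 0"
        by (cases "m = N - 1") auto
    qed
    then have "N \<le> N - 1"
      unfolding N_def by (rule Least_le)
    with \<open>1 \<le> N\<close> show False
      by simp
  qed
qed

lemma seqval_periodic:
  assumes "1 < \<beta>" "binseq \<eta>" "\<forall>i. \<eta> (N + i) = \<eta> i"
  shows "seqval \<beta> \<eta> * (1 - 1 / \<beta> ^ N) = (\<Sum>i<N. real (\<eta> i) / \<beta> ^ (i + 1))"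
proof -
  have "tail_value \<beta> \<eta> N = seqval \<beta> \<eta>"
    unfolding tail_value_def using assms(3) by simp
  then show ?thesis
    using tail_value_prefix[OF assms(1,2), of 0 N] by (simp add: tail_value_0 algebra_simps)
qed

lemma quasi_greedy1_expansion_of_1:
  assumes "1 < \<beta>" "\<beta> < 2"
  shows "binseq (quasi_greedy1 \<beta>)" "seqval \<beta> (quasi_greedy1 \<beta>) = 1"
proof -
  have "binseq (quasi_greedy1 \<beta>) \<and> seqval \<beta> (quasi_greedy1 \<beta>) = 1"
  proof (cases "\<exists>n. \<forall>m\<ge>n. greedy1 \<beta> m = 0")
    case False
    then show ?thesis
      unfolding quasi_greedy1_def if_not_P[OF False] using binseq_greedy1 seqval_greedy1 assms by simp
  next
    case True
    define g where "g = greedy1 \<beta>"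
    define N where "N = (LEAST n. \<forall>m\<ge>n. g m = 0)"
    define \<eta> where "\<eta> i = (if i mod N = N - 1 then 0 else g (i mod N))" for i
    have N: "1 \<le> N" "g (N - 1) = 1" "\<forall>m\<ge>N. g m = 0"
      unfolding g_def N_def using greedy1_finite_last_digit[OF assms True] by blast+
    have g_bin: "binseq g"
      unfolding g_def using binseq_greedy1[OF assms] .
    have \<eta>_bin: "binseq \<eta>"
      using g_bin unfolding binseq_def \<eta>_def by auto
    have "(\<Sum>i<N. real (g i) / \<beta> ^ (i + 1)) = 1"
      using tail_value_prefix[OF assms(1) g_bin, of 0 N] seqval_greedy1[OF assms] N(3)
      unfolding g_def tail_value_def by (simp add: tail_value_0 seqval_def)
    moreover have "(\<Sum>i<N. real (g i) / \<beta> ^ (i + 1))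
        = (\<Sum>i<N. real (\<eta> i) / \<beta> ^ (i + 1)) + 1 / \<beta> ^ N"
    proof -
      obtain M where M: "N = Suc M"
        using N(1) by (cases N) auto
      have "(\<Sum>i<M. real (\<eta> i) / \<beta> ^ (i + 1)) = (\<Sum>i<M. real (g i) / \<beta> ^ (i + 1))"
        by (intro sum.cong) (auto simp: \<eta>_def M)
      moreover have "\<eta> M = 0" "g M = 1"
        using N(2) by (simp_all add: \<eta>_def M)
      ultimately show ?thesis
        unfolding M by simp
    qed
    moreover have "\<forall>i. \<eta> (N + i) = \<eta> i"
      unfolding \<eta>_def by simp
    ultimately have "seqval \<beta> \<eta> * (1 - 1 / \<beta> ^ N) = 1 - 1 / \<beta> ^ N"
      using seqval_periodic[OF assms(1) \<eta>_bin] by simp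
    moreover have "1 < \<beta> ^ N"
      using assms(1) N(1) by (intro one_less_power) auto
    moreover have "quasi_greedy1 \<beta> = \<eta>"
      using True unfolding quasi_greedy1_def \<eta>_def N_def g_def by (simp add: Let_def)
    ultimately show ?thesis
      using \<eta>_bin by simp
  qed
  then show "binseq (quasi_greedy1 \<beta>)" "seqval \<beta> (quasi_greedy1 \<beta>) = 1"
    by auto
qed

section \<open>Forcing words\<close>

lemma occurs_at_Nil [simp]: "occurs_at [] a n"
  unfolding occurs_at_def by simp

lemma occurs_at_Cons [simp]: "occurs_at (x # w) a n \<longleftrightarrow> a n = x \<and> occurs_at w a (Suc n)"
  unfolding occurs_at_def by (simp add: upt_rec[of n] del: upt_Suc)

lemma occurs_at_append [simp]:
  "occurs_at (w @ v) a n \<longleftrightarrow> occurs_at w a n \<and> occurs_at v a (n + length w)"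
  by (induction w arbitrary: n) simp_all

lemma occurs_at_iff_nth: "occurs_at w a n \<longleftrightarrow> (\<forall>i<length w. a (n + i) = w ! i)"
  unfolding occurs_at_def list_eq_iff_nth_eq by auto

lemma occurs_at_map_upt: "occurs_at (map f [0..<j]) a n \<longleftrightarrow> (\<forall>i<j. a (n + i) = f i)"
  by (simp add: occurs_at_iff_nth)

lemma occurs_at_replicate: "occurs_at (replicate j x) a n \<longleftrightarrow> (\<forall>i<j. a (n + i) = x)"
  by (simp add: occurs_at_iff_nth)

lemma occurs_at_compl_seq:
  assumes "occurs_at w a n"
  shows "occurs_at (map (\<lambda>x. 1 - x) w) (compl_seq a) n"
proof -
  have "map (\<lambda>i. 1 - a i) [n..<n + length w] = map (\<lambda>x. 1 - x) (map a [n..<n + length w])"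
    by simp
  with assms show ?thesis
    unfolding occurs_at_def compl_seq_def by simp
qed

lemma occurs_at_binseq_set:
  assumes "binseq a" "occurs_at w a n"
  shows "set w \<subseteq> {0, 1}"
proof
  fix x
  assume "x \<in> set w"
  then obtain i where "i < length w" "x = w ! i"
    by (auto simp: in_set_conv_nth)
  then show "x \<in> {0, 1}"
    using assms unfolding occurs_at_iff_nth binseq_def by metis
qed

definition forces_switch :: "real \<Rightarrow> nat list \<Rightarrow> bool" where
  "forces_switch \<beta> w \<longleftrightarrow>
     (\<forall>b m. binseq b \<and> occurs_at w b m \<longrightarrow> (\<exists>q. tail_value \<beta> b q \<in> switch_region \<beta>))"

lemma forces_switch_map_compl:
  assumes "1 < \<beta>" "set w \<subseteq> {0, 1}" "forces_switch \<beta> w"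
  shows "forces_switch \<beta> (map (\<lambda>x. 1 - x) w)"
  unfolding forces_switch_def
proof (intro allI impI)
  fix b m
  assume b: "binseq b \<and> occurs_at (map (\<lambda>x. 1 - x) w) b m"
  have "map (\<lambda>x. 1 - x) (map (\<lambda>x. 1 - x) w) = w"
    using assms(2) by (induction w) auto
  then have "occurs_at w (compl_seq b) m"
    using occurs_at_compl_seq[of "map (\<lambda>x. 1 - x) w" b m] b by simp
  then obtain q where "tail_value \<beta> (compl_seq b) q \<in> switch_region \<beta>"
    using assms(3) binseq_compl_seq b unfolding forces_switch_def by blast
  then show "\<exists>q. tail_value \<beta> b q \<in> switch_region \<beta>"
    using tail_value_compl_seq_mem_switch_region_iff[OF assms(1)] b by blast
qed

text \<open>After the \<open>0\<close>, either the tail already reaches the value \<open>1\<close> of \<open>\<eta>\<close>, or it stays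
  below \<open>\<eta>\<close>, and then the tail behind the final \<open>1\<close> is squeezed into the switch region.\<close>

lemma forces_switch_zero_prefix_one:
  assumes "1 < \<beta>" "binseq \<eta>" "tail_value \<beta> \<eta> 0 = 1"
    and "tail_value \<beta> \<eta> j \<le> 1 / (\<beta> * (\<beta> - 1))"
  shows "forces_switch \<beta> (0 # map \<eta> [0..<j] @ [1])"
  unfolding forces_switch_def
proof (intro allI impI)
  fix b m
  assume "binseq b \<and> occurs_at (0 # map \<eta> [0..<j] @ [1]) b m"
  then have b: "binseq b" "b m = 0" "\<forall>i<j. b (Suc m + i) = \<eta> (0 + i)" "b (Suc m + j) = 1"
    by (simp_all add: occurs_at_map_upt)
  show "\<exists>q. tail_value \<beta> b q \<in> switch_region \<beta>"
  proof (cases "1 \<le> tail_value \<beta> b (Suc m)")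
    case True
    then show ?thesis
      using digit_zero_tail_value_mem_switch_region_iff[OF assms(1) b(1,2)] by blast
  next
    case False
    then have "tail_value \<beta> b (Suc m + j) < tail_value \<beta> \<eta> j"
      using tail_value_le_iff_common_prefix[OF assms(1,2) b(1,3)] assms(3) by simp
    then have "tail_value \<beta> b (Suc m + j) \<in> switch_region \<beta>"
      using digit_one_tail_value_ge[OF assms(1) b(1,4)] assms(4)
      unfolding switch_region_def by simp
    then show ?thesis ..
  qed
qed

lemma ones_block_tail_value_ge_1:
  assumes "1 < \<beta>" "\<beta> < 2"
  obtains J where "\<And>b m. binseq b \<Longrightarrow> \<forall>i<J. b (m + i) = 1 \<Longrightarrow> 1 \<le> tail_value \<beta> b m"
proof -
  have "1 < 1 / (\<beta> - 1)"
    using assms by (simp add: field_simps)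
  then have "\<forall>\<^sub>F J in sequentially. 1 < (\<Sum>i<J. 1 / \<beta> ^ (i + 1))"
    by (rule order_tendstoD(1)[OF inverse_powers_sums[OF assms(1), unfolded sums_def]])
  then obtain J where J: "1 \<le> (\<Sum>i<J. 1 / \<beta> ^ (i + 1))"
    unfolding eventually_sequentially by (meson less_imp_le order_refl)
  have "1 \<le> tail_value \<beta> b m" if "binseq b" "\<forall>i<J. b (m + i) = 1" for b m
  proof -
    have "tail_value \<beta> b m = (\<Sum>i<J. 1 / \<beta> ^ (i + 1)) + tail_value \<beta> b (m + J) / \<beta> ^ J"
      using tail_value_prefix[OF assms(1) that(1), of m J] that(2) by simp
    moreover have "0 \<le> tail_value \<beta> b (m + J) / \<beta> ^ J"
      using tail_value_bounds[OF assms(1) that(1), of "m + J"] assms(1) by simp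
    ultimately show ?thesis
      using J by linarith
  qed
  then show ?thesis
    using that by blast
qed

lemma forces_switch_zero_ones:
  assumes "1 < \<beta>" "\<And>b m. binseq b \<Longrightarrow> \<forall>i<J. b (m + i) = 1 \<Longrightarrow> 1 \<le> tail_value \<beta> b m"
  shows "forces_switch \<beta> (0 # replicate J 1)"
  unfolding forces_switch_def
proof (intro allI impI)
  fix b m
  assume "binseq b \<and> occurs_at (0 # replicate J 1) b m"
  then have "binseq b" "b m = 0" "1 \<le> tail_value \<beta> b (Suc m)"
    using assms(2) by (auto simp: occurs_at_replicate)
  then show "\<exists>q. tail_value \<beta> b q \<in> switch_region \<beta>"
    using digit_zero_tail_value_mem_switch_region_iff[OF assms(1)] by blast
qed

lemma first_disagreement:
  fixes a \<eta> :: "nat \<Rightarrow> 'a" and k m :: nat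
  obtains j where "j \<le> k" "\<forall>i<j. a (m + i) = \<eta> i" "j < k \<Longrightarrow> a (m + j) \<noteq> \<eta> j"
proof -
  define j where "j = (LEAST j. k \<le> j \<or> a (m + j) \<noteq> \<eta> j)"
  have "k \<le> j \<or> a (m + j) \<noteq> \<eta> j"
    unfolding j_def by (rule LeastI[of _ k]) simp
  moreover have "j \<le> k"
    unfolding j_def by (rule Least_le) simp
  moreover have "\<forall>i<j. a (m + i) = \<eta> i"
    using not_less_Least \<open>j \<le> k\<close> unfolding j_def by fastforce
  ultimately show ?thesis
    using that by auto
qed

lemma digit_zero_tail_value_eq_top_imp_ones:
  assumes "1 < \<beta>" "binseq a" "a p = 0" "tail_value \<beta> a p = 1 / (\<beta> * (\<beta> - 1))"
  shows "a (Suc p + i) = 1"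
proof -
  have "tail_value \<beta> a (Suc p) = \<beta> * tail_value \<beta> a p"
    using tail_value_Suc[OF assms(1,2), of p] assms(1,3) by simp
  also have "\<dots> = 1 / (\<beta> - 1)"
    using assms(1,4) by simp
  finally show ?thesis
    using tail_value_eq_max_imp_ones[OF assms(1,2)] by blast
qed

text \<open>Compare the tail after the \<open>0\<close> with the quasi-greedy expansion \<open>\<eta>\<close> of \<open>1\<close>,
  which it dominates. At the first disagreement before position \<open>k\<close> the tail must carry a
  \<open>1\<close> where \<open>\<eta>\<close> has a \<open>0\<close>, because a \<open>1\<close> of \<open>\<eta>\<close> outside the switch region is
  followed by a tail larger than any tail behind a \<open>0\<close>. Without disagreement, the tail at
  position \<open>k\<close> dominates \<open>Q\<^sup>k(1) = 1 / (\<beta> (\<beta> - 1))\<close>, so it either starts with \<open>1\<close> or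
  equals it and continues with ones only.\<close>

lemma zero_switch_tail_forcing_word:
  assumes "1 < \<beta>" "\<beta> < 2"
    and \<eta>: "binseq \<eta>" "tail_value \<beta> \<eta> 0 = 1" "tail_value \<beta> \<eta> k = 1 / (\<beta> * (\<beta> - 1))"
      "\<forall>j<k. tail_value \<beta> \<eta> j \<notin> switch_region \<beta>"
    and ones: "\<And>b m. binseq b \<Longrightarrow> \<forall>i<J. b (m + i) = 1 \<Longrightarrow> 1 \<le> tail_value \<beta> b m"
    and a: "binseq a" "a n = 0" "tail_value \<beta> a n \<in> switch_region \<beta>"
  shows "\<exists>w p. length w \<le> max (k + 2) (J + 1) \<and> occurs_at w a p \<and> forces_switch \<beta> w"
proof -
  obtain j where j: "j \<le> k" "\<forall>i<j. a (Suc n + i) = \<eta> (0 + i)" "j < k \<Longrightarrow> a (Suc n + j) \<noteq> \<eta> j"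
    using first_disagreement[of k a "Suc n" \<eta>] by auto
  have "1 \<le> tail_value \<beta> a (Suc n)"
    using digit_zero_tail_value_mem_switch_region_iff[OF assms(1) a(1,2)] a(3) by blast
  then have dominates: "tail_value \<beta> \<eta> j \<le> tail_value \<beta> a (Suc n + j)"
    using tail_value_le_iff_common_prefix[OF assms(1) \<eta>(1) a(1) j(2)] \<eta>(2) by simp
  consider (one) "a (Suc n + j) = 1" | (zero) "a (Suc n + j) = 0"
    using binseq_cases[OF a(1), of "Suc n + j"] by auto
  then show ?thesis
  proof cases
    case one
    have "tail_value \<beta> \<eta> j \<le> 1 / (\<beta> * (\<beta> - 1))"
    proof (cases "j = k")
      case False
      then have "\<eta> j = 0"
        using j one binseq_cases[OF \<eta>(1), of j] by auto
      then show ?thesis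
        using digit_zero_tail_value_le[OF assms(1) \<eta>(1)] by blast
    qed (use \<eta>(3) in simp)
    then have "forces_switch \<beta> (0 # map \<eta> [0..<j] @ [1])"
      using forces_switch_zero_prefix_one[OF assms(1) \<eta>(1,2)] by blast
    moreover have "occurs_at (0 # map \<eta> [0..<j] @ [1]) a n"
      using a(2) j(2) one by (simp add: occurs_at_map_upt)
    ultimately show ?thesis
      using j(1) by (intro exI[of _ "0 # map \<eta> [0..<j] @ [1]"] exI[of _ n]) simp
  next
    case zero
    have upper: "tail_value \<beta> a (Suc n + j) \<le> 1 / (\<beta> * (\<beta> - 1))"
      using digit_zero_tail_value_le[OF assms(1) a(1) zero] .
    have "j = k"
    proof (rule ccontr)
      assume "j \<noteq> k"
      then have "\<eta> j = 1" "tail_value \<beta> \<eta> j \<notin> switch_region \<beta>"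
        using j zero binseq_cases[OF \<eta>(1), of j] \<eta>(4) by auto
      then have "1 / (\<beta> * (\<beta> - 1)) < tail_value \<beta> \<eta> j"
        using digit_one_tail_value_ge[OF assms(1) \<eta>(1), of j]
        unfolding switch_region_def by auto
      with upper dominates show False
        by simp
    qed
    then have "\<forall>i<J. a (Suc (Suc n + k) + i) = 1"
      using digit_zero_tail_value_eq_top_imp_ones[OF assms(1) a(1) zero] upper dominates \<eta>(3)
      by simp
    then have "occurs_at (0 # replicate J 1) a (Suc n + k)"
      using zero \<open>j = k\<close> by (simp add: occurs_at_replicate)
    then show ?thesis
      using forces_switch_zero_ones[OF assms(1) ones]
      by (intro exI[of _ "0 # replicate J 1"] exI[of _ "Suc n + k"]) simp
  qed
qed

lemma switch_tail_forcing_word: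
  assumes "1 < \<beta>" "\<beta> < 2"
    and \<eta>: "binseq \<eta>" "tail_value \<beta> \<eta> 0 = 1" "tail_value \<beta> \<eta> k = 1 / (\<beta> * (\<beta> - 1))"
      "\<forall>j<k. tail_value \<beta> \<eta> j \<notin> switch_region \<beta>"
    and ones: "\<And>b m. binseq b \<Longrightarrow> \<forall>i<J. b (m + i) = 1 \<Longrightarrow> 1 \<le> tail_value \<beta> b m"
    and a: "binseq a" "tail_value \<beta> a n \<in> switch_region \<beta>"
  shows "\<exists>w p. length w \<le> max (k + 2) (J + 1) \<and> occurs_at w a p \<and> forces_switch \<beta> w"
proof (cases "a n = 0")
  case True
  with zero_switch_tail_forcing_word[OF assms(1,2) \<eta> ones a(1) _ a(2)] show ?thesis
    by blast
next
  case False
  then have "compl_seq a n = 0"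
    using binseq_cases[OF a(1), of n] unfolding compl_seq_def by auto
  moreover have "tail_value \<beta> (compl_seq a) n \<in> switch_region \<beta>"
    using tail_value_compl_seq_mem_switch_region_iff[OF assms(1) a(1)] a(2) by blast
  ultimately obtain w p where w: "length w \<le> max (k + 2) (J + 1)"
      "occurs_at w (compl_seq a) p" "forces_switch \<beta> w"
    using zero_switch_tail_forcing_word[OF assms(1,2) \<eta> ones binseq_compl_seq[OF a(1)]] by blast
  have "occurs_at (map (\<lambda>x. 1 - x) w) a p"
    using occurs_at_compl_seq[OF w(2)] compl_seq_compl_seq[OF a(1)] by simp
  moreover have "forces_switch \<beta> (map (\<lambda>x. 1 - x) w)"
    using forces_switch_map_compl[OF assms(1) _ w(3)]
      occurs_at_binseq_set[OF binseq_compl_seq[OF a(1)] w(2)] by blast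
  ultimately show ?thesis
    using w(1) by (intro exI[of _ "map (\<lambda>x. 1 - x) w"] exI[of _ p]) simp
qed

lemma is_SFT_Utilde_if_bounded_forcing_words:
  assumes "1 < \<beta>" "\<beta> < 2"
    and words: "\<And>a n. binseq a \<Longrightarrow> tail_value \<beta> a n \<in> switch_region \<beta> \<Longrightarrow>
      \<exists>w p. length w \<le> L \<and> occurs_at w a p \<and> forces_switch \<beta> w"
  shows "is_SFT (Utilde \<beta>)"
proof -
  define F where "F = {w. set w \<subseteq> {0, 1} \<and> length w \<le> L \<and> forces_switch \<beta> w}"
  have "finite F"
    using finite_lists_length_le[of "{0, 1 :: nat}" L] unfolding F_def
    by (rule rev_finite_subset) auto
  moreover have "Utilde \<beta> = {a. binseq a \<and> (\<forall>w\<in>F. \<forall>n. \<not> occurs_at w a n)}"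
  proof (intro set_eqI iffI)
    fix a
    assume "a \<in> Utilde \<beta>"
    moreover from this have "binseq a"
      unfolding Utilde_def by simp
    ultimately show "a \<in> {a. binseq a \<and> (\<forall>w\<in>F. \<forall>n. \<not> occurs_at w a n)}"
      using Utilde_iff_tail_values[OF assms(1,2)] unfolding F_def forces_switch_def by blast
  next
    fix a
    assume "a \<in> {a. binseq a \<and> (\<forall>w\<in>F. \<forall>n. \<not> occurs_at w a n)}"
    then have a: "binseq a" "\<forall>w\<in>F. \<forall>n. \<not> occurs_at w a n"
      by auto
    show "a \<in> Utilde \<beta>"
    proof (rule ccontr)
      assume "a \<notin> Utilde \<beta>"
      then obtain n where "tail_value \<beta> a n \<in> switch_region \<beta>"
        using Utilde_iff_tail_values[OF assms(1,2) a(1)] by blast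
      then obtain w p where "length w \<le> L" "occurs_at w a p" "forces_switch \<beta> w"
        using words a(1) by blast
      moreover from this have "set w \<subseteq> {0, 1}"
        using occurs_at_binseq_set[OF a(1)] by blast
      ultimately show False
        using a(2) unfolding F_def by blast
    qed
  qed
  ultimately show ?thesis
    unfolding is_SFT_def by blast
qed

lemma golden_ratio_less_imp:
  assumes "(1 + sqrt 5) / 2 < (\<beta>::real)"
  shows "1 < \<beta>" "1 < \<beta> * (\<beta> - 1)"
proof -
  have "sqrt 5 < 2 * \<beta> - 1"
    using assms by simp
  moreover have "1 < sqrt 5"
    by simp
  ultimately show "1 < \<beta>"
    by linarith
  have "(sqrt 5) ^ 2 < (2 * \<beta> - 1) ^ 2"
    using \<open>sqrt 5 < 2 * \<beta> - 1\<close> by (intro power_strict_mono) auto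
  then show "1 < \<beta> * (\<beta> - 1)"
    by (simp add: power2_eq_square algebra_simps)
qed

theorem lemma3p8:
  fixes \<beta> :: real
  assumes "(1 + sqrt 5) / 2 < \<beta>" and "\<beta> < 2"
    and "\<exists>k\<ge>1. Qorb \<beta> k = 1 / (\<beta> * (\<beta> - 1)) \<and>
           (\<forall>i. 1 \<le> i \<and> i < k \<longrightarrow> Qorb \<beta> i \<notin> {1 / \<beta> .. 1 / (\<beta> * (\<beta> - 1))})"
  shows "is_SFT (Utilde \<beta>)"
proof -
  note \<beta> = golden_ratio_less_imp[OF assms(1)] assms(2)
  define \<eta> where "\<eta> = quasi_greedy1 \<beta>"
  have \<eta>: "binseq \<eta>" "tail_value \<beta> \<eta> 0 = 1"
    using quasi_greedy1_expansion_of_1[OF \<beta>(1,3)] unfolding \<eta>_def by (simp_all add: tail_value_0)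
  have "Qorb \<beta> = tail_value \<beta> \<eta>"
    by (simp add: fun_eq_iff Qorb_def tail_value_def seqval_def \<eta>_def)
  then obtain k where k: "tail_value \<beta> \<eta> k = 1 / (\<beta> * (\<beta> - 1))"
      "\<forall>i. 1 \<le> i \<and> i < k \<longrightarrow> tail_value \<beta> \<eta> i \<notin> switch_region \<beta>"
    using assms(3) unfolding switch_region_def by auto
  moreover have "tail_value \<beta> \<eta> 0 \<notin> switch_region \<beta>"
    \<comment> \<open>here \<open>\<beta>\<close> exceeding the golden ratio is used: \<open>1 / (\<beta> (\<beta> - 1)) < 1\<close>\<close>
    using \<eta>(2) \<beta>(2) unfolding switch_region_def by simp
  ultimately have "\<forall>j<k. tail_value \<beta> \<eta> j \<notin> switch_region \<beta>"
    by (metis less_one not_le)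
  moreover obtain J where "\<And>b m. binseq b \<Longrightarrow> \<forall>i<J. b (m + i) = 1 \<Longrightarrow> 1 \<le> tail_value \<beta> b m"
    using ones_block_tail_value_ge_1[OF \<beta>(1,3)] by blast
  ultimately show ?thesis
    using is_SFT_Utilde_if_bounded_forcing_words[OF \<beta>(1,3)]
      switch_tail_forcing_word[OF \<beta>(1,3) \<eta> k(1)] by blast
qed

end
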